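(* Let $\tilde\tau\in(0,1/2)$, $\epsilon,\epsilon'\in(0,1/2)$, and $\tau'=(\tau N-2)/(N-1)$. Let $\mathcal N_r$ be an arbitrary neighborhood of radius $r=2^{[1-H(\tau')]N/2-g(N)}$, with $g(N)=o(N)$. With probability at least $2^{-[1-H(\tau')](2\epsilon'+\epsilon'^2)N-o(N)}$, the initial configuration contains at least one $\epsilon'$-radical region inside $\mathcal N_r$.
   Context: Setting: $G_n$ is the $n\times n$ torus grid, $w$ is a positive integer, and $N=(2w+1)^2$. A neighborhood of radius $\rho$ is the set of vertices within $\ell_\infty$ distance $\rho$ of a center vertex. In the initial configuration, each vertex holds an agent of type $\pm1$, independently with probability $1/2$ each. The intolerance is $\tau=\lceil\tilde\tau N\rceil/N$, and $H$ is the binary entropy function. Let $\hat\tau=\tau\big(1-\frac{1}{\tau N^{1/2-\epsilon}}\big)$. An $\epsilon'$-radical region is a neighborhood of radius $(1+\epsilon')w$ containing fewer than $\hat\tau(1+\epsilon')^2N$ agents of type $-1$. A term $o(N)$ denotes some function $h(N)$ with $h(N)/N\to0$. *)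

theory Defs
  imports "HOL-Probability.Probability" "HOL-Library.Landau_Symbols"
begin

definition bin_entropy :: "real \<Rightarrow> real" where
  "bin_entropy x = - x * log 2 x - (1 - x) * log 2 (1 - x)"

definition torus_vertices :: "nat \<Rightarrow> (int \<times> int) set" where
  "torus_vertices n = {0..<int n} \<times> {0..<int n}"

definition cyc_dist :: "nat \<Rightarrow> int \<Rightarrow> int \<Rightarrow> int" where
  "cyc_dist n a b = min ((a - b) mod int n) ((b - a) mod int n)"

definition torus_dist :: "nat \<Rightarrow> int \<times> int \<Rightarrow> int \<times> int \<Rightarrow> int" where
  "torus_dist n u v = max (cyc_dist n (fst u) (fst v)) (cyc_dist n (snd u) (snd v))"

definition nbhd :: "nat \<Rightarrow> int \<times> int \<Rightarrow> real \<Rightarrow> (int \<times> int) set" where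
  "nbhd n c \<rho> = {v \<in> torus_vertices n. real_of_int (torus_dist n c v) \<le> \<rho>}"

text \<open>Configurations: each vertex carries type +1 or -1; uniform distribution
  = independent fair types.\<close>
definition configs :: "nat \<Rightarrow> ((int \<times> int) \<Rightarrow> int) set" where
  "configs n = PiE (torus_vertices n) (\<lambda>_. {-1, 1})"

definition config_prob :: "nat \<Rightarrow> (((int \<times> int) \<Rightarrow> int) \<Rightarrow> bool) \<Rightarrow> real" where
  "config_prob n P = measure_pmf.prob (pmf_of_set (configs n)) {\<sigma>. P \<sigma>}"

definition Nw :: "nat \<Rightarrow> nat" where "Nw w = (2 * w + 1)^2"

definition tau :: "real \<Rightarrow> nat \<Rightarrow> real" where
  "tau tt w = real_of_int \<lceil>tt * real (Nw w)\<rceil> / real (Nw w)"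

definition tau_hat :: "real \<Rightarrow> real \<Rightarrow> nat \<Rightarrow> real" where
  "tau_hat tt \<epsilon> w = tau tt w * (1 - 1 / (tau tt w * real (Nw w) powr (1/2 - \<epsilon>)))"

definition tau' :: "real \<Rightarrow> nat \<Rightarrow> real" where
  "tau' tt w = (tau tt w * real (Nw w) - 2) / (real (Nw w) - 1)"

definition minus_count :: "((int \<times> int) \<Rightarrow> int) \<Rightarrow> (int \<times> int) set \<Rightarrow> nat" where
  "minus_count \<sigma> S = card {v \<in> S. \<sigma> v = -1}"

definition radical_region ::
  "real \<Rightarrow> real \<Rightarrow> real \<Rightarrow> nat \<Rightarrow> nat \<Rightarrow> ((int \<times> int) \<Rightarrow> int) \<Rightarrow> int \<times> int \<Rightarrow> bool" where
  "radical_region tt \<epsilon> \<epsilon>' w n \<sigma> c \<longleftrightarrow> c \<in> torus_vertices n \<and>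
     real (minus_count \<sigma> (nbhd n c ((1 + \<epsilon>') * real w)))
       < tau_hat tt \<epsilon> w * (1 + \<epsilon>')^2 * real (Nw w)"

end

(* The r-neighbourhood of c0 contains K = L^2 pairwise disjoint neighbourhoods of radius
   (1 + eps') w, with L ~ r / ((2 + 2 eps') w).  Each of them holds M ~ (1 + eps')^2 N agents and is
   radical, independently of the others, with probability at least
   q = (M choose k) / 2^M >= 2^(M (H(k/M) - 1)) / (M + 1), where k ~ tau-hat M is the largest
   admissible number of agents of type -1.  So some of them is radical with probability
   1 - (1 - q)^K >= min (q K, 1) / 2.  As r^2 = 2^((1 - H(tau')) N - 2 g(N)) and
   H(k/M), H(tau') both tend to H(tau~) < 1, the exponent of q K is
   -(1 - H(tau')) ((1 + eps')^2 - 1) N - o(N). *)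

theory Submission
  imports Defs "HOL-Real_Asymp.Real_Asymp"
begin

subsection \<open>Binomial coefficients and binary entropy\<close>

definition binomial_term :: "nat \<Rightarrow> nat \<Rightarrow> nat \<Rightarrow> real" where
  "binomial_term M k j = real (M choose j) * real k ^ j * real (M - k) ^ (M - j)"

lemma binomial_term_nonneg: "binomial_term M k j \<ge> 0"
  unfolding binomial_term_def by simp

lemma binomial_term_Suc:
  assumes "j < M"
  shows "binomial_term M k (Suc j) * (Suc j) * (M - k) = binomial_term M k j * (M - j) * k"
proof -
  have choose: "real (M choose Suc j) * Suc j = real (M choose j) * (M - j)"
    using binomial_absorption[of j M] binomial_absorb_comp[of M j]
    by (metis mult.commute of_nat_mult)
  have "M - j = Suc (M - Suc j)" using assms by simp
  hence pow: "real (M - k) ^ (M - j) = real (M - k) ^ (M - Suc j) * (M - k)" by simp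
  have "binomial_term M k (Suc j) * Suc j * (M - k) =
        (real (M choose Suc j) * Suc j) * real k ^ Suc j * real (M - k) ^ (M - Suc j) * (M - k)"
    unfolding binomial_term_def by (simp add: algebra_simps)
  also have "\<dots> = binomial_term M k j * (M - j) * k"
    unfolding choose binomial_term_def using pow assms by (simp add: algebra_simps of_nat_diff)
  finally show ?thesis .
qed

lemma binomial_term_Suc_le:
  assumes "k \<le> j" "k < M"
  shows "binomial_term M k (Suc j) \<le> binomial_term M k j"
proof (cases "j < M")
  case False
  hence "binomial_term M k (Suc j) = 0" unfolding binomial_term_def by simp
  then show ?thesis using binomial_term_nonneg[of M k j] by simp
next
  case True
  have le: "real (M - j) * real k \<le> real (Suc j) * real (M - k)"
    using mult_mono[of "real (M - j)" "real (M - k)" "real k" "real (Suc j)"] assms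
    by (simp add: mult.commute)
  have "binomial_term M k (Suc j) * (real (Suc j) * real (M - k))
        = binomial_term M k j * (real (M - j) * real k)"
    using binomial_term_Suc[OF True, of k] by (simp add: algebra_simps)
  also have "\<dots> \<le> binomial_term M k j * (real (Suc j) * real (M - k))"
    using le binomial_term_nonneg by (rule mult_left_mono)
  finally show ?thesis
    by (rule mult_right_le_imp_le) (use assms in simp)
qed

lemma binomial_term_le_Suc:
  assumes "j < k" "k \<le> M"
  shows "binomial_term M k j \<le> binomial_term M k (Suc j)"
proof -
  have le: "real (Suc j) * real (M - k) \<le> real (M - j) * real k"
    using mult_mono[of "real (Suc j)" "real k" "real (M - k)" "real (M - j)"] assms
    by (simp add: mult.commute)
  have "binomial_term M k j * (real (M - j) * real k)
        = binomial_term M k (Suc j) * (real (Suc j) * real (M - k))"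
    using binomial_term_Suc[of j M k] assms by (simp add: algebra_simps)
  also have "\<dots> \<le> binomial_term M k (Suc j) * (real (M - j) * real k)"
    using le binomial_term_nonneg by (rule mult_left_mono)
  finally show ?thesis
    by (rule mult_right_le_imp_le) (use assms in simp)
qed

lemma binomial_term_le_central:
  assumes "k < M"
  shows "binomial_term M k j \<le> binomial_term M k k"
proof (cases "k \<le> j")
  case True
  then show ?thesis
  proof (induction j rule: dec_induct)
    case (step i)
    then show ?case using binomial_term_Suc_le[of k i M] assms by simp
  qed simp
next
  case False
  hence "j \<le> k" by simp
  then show ?thesis
  proof (induction j rule: inc_induct)
    case (step i)
    then show ?case using binomial_term_le_Suc[of i k M] assms by simp
  qed simp
qed

text \<open>The central term is the largest of the \<open>M + 1\<close> terms of the binomial expansion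
  of \<open>M ^ M = (k + (M - k)) ^ M\<close>.\<close>
lemma power_self_le_binomial_term:
  assumes "k < M"
  shows "real M ^ M \<le> real (M + 1) * binomial_term M k k"
proof -
  have "real M ^ M = (real k + real (M - k)) ^ M" using assms by (simp add: of_nat_diff)
  also have "\<dots> = (\<Sum>j\<le>M. binomial_term M k j)"
    unfolding binomial_ring binomial_term_def by simp
  also have "\<dots> \<le> (\<Sum>j\<le>M. binomial_term M k k)"
    by (intro sum_mono binomial_term_le_central assms)
  finally show ?thesis by simp
qed

lemma powr_real_mult_log:
  assumes "0 < x"
  shows "2 powr (real k * log 2 x) = x ^ k"
  using assms by (simp add: powr_powr[symmetric] mult.commute[of "real k"] powr_realpow)

lemma entropy_le_binomial:
  assumes "0 < k" "k < M"
  shows "2 powr (real M * bin_entropy (real k / real M)) \<le> real (M + 1) * real (M choose k)"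
proof -
  define q where "q = real k / real M"
  have q: "0 < q" "q < 1" "1 - q = real (M - k) / real M"
    using assms unfolding q_def by (auto simp: field_simps of_nat_diff)
  have "real M * bin_entropy q = real k * log 2 (1/q) + real (M - k) * log 2 (1/(1-q))"
    using q assms unfolding bin_entropy_def q_def
    by (simp add: log_divide field_simps of_nat_diff)
  moreover have "0 < 1 / q" "0 < 1 / (1 - q)" using q(1,2) by simp_all
  ultimately have "2 powr (real M * bin_entropy q) = (1 / q) ^ k * (1 / (1 - q)) ^ (M - k)"
    by (simp only: powr_add powr_real_mult_log)
  also have "\<dots> = real M ^ M / (real k ^ k * real (M - k) ^ (M - k))"
    unfolding q(3) using assms by (simp add: q_def power_divide power_add[symmetric])
  also have "\<dots> \<le> real (M + 1) * binomial_term M k k / (real k ^ k * real (M - k) ^ (M - k))"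
    using power_self_le_binomial_term[OF assms(2)] assms by (intro divide_right_mono) auto
  also have "\<dots> = real (M + 1) * real (M choose k)"
    unfolding binomial_term_def using assms by simp
  finally show ?thesis unfolding q_def .
qed

text \<open>This is \<open>ln y \<le> y - 1\<close> at \<open>y = 1 / (2 x)\<close>, with equality only at \<open>y = 1\<close>.\<close>
lemma neg_mult_ln_double_le:
  fixes x :: real
  assumes "0 < x"
  shows "- x * ln 2 - x * ln x \<le> 1/2 - x"
    and "x \<noteq> 1/2 \<Longrightarrow> - x * ln 2 - x * ln x < 1/2 - x"
proof -
  have pos: "0 < 1 / (2 * x)" using assms by simp
  have eq: "x * ln (1 / (2 * x)) = - x * ln 2 - x * ln x" and rhs: "x * (1 / (2 * x) - 1) = 1/2 - x"
    using assms by (simp_all add: ln_div ln_mult algebra_simps)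
  show "- x * ln 2 - x * ln x \<le> 1/2 - x"
    using mult_left_mono[OF ln_le_minus_one[OF pos], of x] assms unfolding eq rhs by simp
  assume "x \<noteq> 1/2"
  hence "1 / (2 * x) \<noteq> 1" using assms by (auto simp: field_simps)
  hence "ln (1 / (2 * x)) < 1 / (2 * x) - 1"
    using ln_le_minus_one[OF pos] ln_eq_minus_one[OF pos] by fastforce
  thus "- x * ln 2 - x * ln x < 1/2 - x"
    using mult_strict_left_mono[of _ _ x] assms unfolding eq[symmetric] rhs[symmetric] by blast
qed

lemma bin_entropy_ln: "bin_entropy x = (- x * ln x - (1 - x) * ln (1 - x)) / ln 2"
  unfolding bin_entropy_def log_def by (simp add: field_simps)

lemma bin_entropy_le_1:
  assumes "0 < x" "x < 1"
  shows "bin_entropy x \<le> 1"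
proof -
  have "- x * ln x - (1 - x) * ln (1 - x) \<le> ln 2"
    using neg_mult_ln_double_le(1)[of x] neg_mult_ln_double_le(1)[of "1 - x"] assms
    by (simp add: algebra_simps)
  thus ?thesis unfolding bin_entropy_ln by simp
qed

lemma bin_entropy_less_1:
  assumes "0 < x" "x < 1" "x \<noteq> 1/2"
  shows "bin_entropy x < 1"
proof -
  have "- x * ln x - (1 - x) * ln (1 - x) < ln 2"
    using neg_mult_ln_double_le(2)[of x] neg_mult_ln_double_le(1)[of "1 - x"] assms
    by (simp add: algebra_simps)
  thus ?thesis unfolding bin_entropy_ln by simp
qed

lemma isCont_bin_entropy:
  assumes "0 < x" "x < 1"
  shows "isCont bin_entropy x"
  unfolding bin_entropy_def[abs_def] using assms by (intro continuous_intros) auto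


subsection \<open>Neighbourhoods on the torus\<close>

definition cyc_translate :: "nat \<Rightarrow> int \<Rightarrow> int set \<Rightarrow> int set" where
  "cyc_translate n x A = (\<lambda>d. (x + d) mod int n) ` A"

lemma inj_on_mod_translate:
  assumes "\<And>d d'. d \<in> S \<Longrightarrow> d' \<in> S \<Longrightarrow> \<bar>d - d'\<bar> < int n"
  shows "inj_on (\<lambda>d. (x + d) mod int n) S"
proof (rule inj_onI)
  fix d d' assume d: "d \<in> S" "d' \<in> S" "(x + d) mod int n = (x + d') mod int n"
  hence "int n dvd d - d'" by (metis add_diff_cancel_left mod_eq_dvd_iff)
  then obtain t where t: "d - d' = int n * t" by (auto simp: dvd_def)
  have "\<bar>d - d'\<bar> < int n" using assms d by simp
  hence "int n * \<bar>t\<bar> < int n * 1" using t by (simp add: abs_mult)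
  hence "\<bar>t\<bar> < 1" by (rule mult_less_cancel_left_pos[THEN iffD1, rotated]) (use assms d in force)
  hence "t = 0" by simp
  thus "d = d'" using t by simp
qed

lemma card_cyc_translate_interval:
  assumes "b - a < int n"
  shows "card (cyc_translate n x {a..b}) = nat (b - a + 1)"
proof -
  have "inj_on (\<lambda>d. (x + d) mod int n) {a..b}"
    by (rule inj_on_mod_translate) (use assms in auto)
  thus ?thesis unfolding cyc_translate_def by (simp add: card_image)
qed

lemma cyc_translate_mod_shift:
  "cyc_translate n ((x + t) mod int n) {a..b} = cyc_translate n x {t + a..t + b}"
proof -
  have "cyc_translate n ((x + t) mod int n) {a..b} = (\<lambda>d. (x + d) mod int n) ` ((+) t ` {a..b})"
    unfolding cyc_translate_def image_image by (intro image_cong refl) (simp add: mod_add_left_eq add.assoc)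
  thus ?thesis unfolding cyc_translate_def by (simp add: add.commute)
qed

lemma cyc_ball_eq_translate:
  assumes "2 * m + 1 \<le> int n" "0 \<le> m" "0 \<le> c" "c < int n"
  shows "{b \<in> {0..<int n}. cyc_dist n c b \<le> m} = cyc_translate n c {-m..m}"
proof (intro equalityI subsetI)
  fix b assume "b \<in> {b \<in> {0..<int n}. cyc_dist n c b \<le> m}"
  hence b: "b mod int n = b" "cyc_dist n c b \<le> m" by auto
  have n: "int n > 0" using assms by simp
  consider "(c - b) mod int n \<le> m" | "(b - c) mod int n \<le> m"
    using b(2) unfolding cyc_dist_def by linarith
  then show "b \<in> cyc_translate n c {-m..m}"
  proof cases
    case 1
    have "b = (c + - ((c - b) mod int n)) mod int n"
      using b(1) by (simp add: mod_diff_right_eq)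
    moreover have "0 \<le> (c - b) mod int n" using n by simp
    hence "- ((c - b) mod int n) \<in> {-m..m}" using 1 assms(2) by simp
    ultimately show ?thesis unfolding cyc_translate_def by blast
  next
    case 2
    have "b = (c + (b - c) mod int n) mod int n"
      using b(1) by (simp add: mod_add_right_eq)
    moreover have "0 \<le> (b - c) mod int n" using n by simp
    hence "(b - c) mod int n \<in> {-m..m}" using 2 assms(2) by simp
    ultimately show ?thesis unfolding cyc_translate_def by blast
  qed
next
  fix b assume "b \<in> cyc_translate n c {-m..m}"
  then obtain d where d: "d \<in> {-m..m}" "b = (c + d) mod int n" unfolding cyc_translate_def by auto
  have n: "int n > 0" using assms by simp
  have "cyc_dist n c b \<le> m"
  proof (cases "0 \<le> d")
    case True
    have "(b - c) mod int n = d" using d True assms by (simp add: mod_diff_left_eq)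
    thus ?thesis unfolding cyc_dist_def using d by (simp add: min_le_iff_disj)
  next
    case False
    have "(c - b) mod int n = - d" using d False assms by (simp add: mod_diff_right_eq)
    thus ?thesis unfolding cyc_dist_def using d by (simp add: min_le_iff_disj)
  qed
  thus "b \<in> {b \<in> {0..<int n}. cyc_dist n c b \<le> m}" using d n by simp
qed

lemma nbhd_eq_cyc_translate:
  assumes "2 * \<lfloor>\<rho>\<rfloor> + 1 \<le> int n" "0 \<le> \<rho>" "c \<in> torus_vertices n"
  shows "nbhd n c \<rho> = cyc_translate n (fst c) {-\<lfloor>\<rho>\<rfloor>..\<lfloor>\<rho>\<rfloor>} \<times> cyc_translate n (snd c) {-\<lfloor>\<rho>\<rfloor>..\<lfloor>\<rho>\<rfloor>}"
proof -
  have c: "0 \<le> fst c" "fst c < int n" "0 \<le> snd c" "snd c < int n"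
    using assms(3) unfolding torus_vertices_def by auto
  have "nbhd n c \<rho> = {b \<in> {0..<int n}. cyc_dist n (fst c) b \<le> \<lfloor>\<rho>\<rfloor>}
                   \<times> {b \<in> {0..<int n}. cyc_dist n (snd c) b \<le> \<lfloor>\<rho>\<rfloor>}"
    unfolding nbhd_def torus_dist_def torus_vertices_def by (auto simp: le_floor_iff)
  thus ?thesis using cyc_ball_eq_translate[OF assms(1)] assms(2) c by simp
qed

definition block_interval :: "int \<Rightarrow> int \<Rightarrow> int \<Rightarrow> int set" where
  "block_interval R m a = {-R + a * (2 * m + 1) .. -R + a * (2 * m + 1) + 2 * m}"

lemma block_interval_subset:
  assumes "0 \<le> m" "0 \<le> a" "a < (2 * R + 1) div (2 * m + 1)"
  shows "block_interval R m a \<subseteq> {-R..R}"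
proof -
  have "(a + 1) * (2 * m + 1) \<le> (2 * R + 1) div (2 * m + 1) * (2 * m + 1)"
    using assms by (intro mult_right_mono) auto
  also have "\<dots> \<le> 2 * R + 1"
    using assms(1) by (simp add: minus_mod_eq_div_mult[symmetric])
  finally show ?thesis
    unfolding block_interval_def using assms by (auto simp: algebra_simps)
qed

lemma block_intervals_disjoint:
  assumes "0 \<le> m" "a < a'"
  shows "block_interval R m a \<inter> block_interval R m a' = {}"
proof -
  have "(a + 1) * (2 * m + 1) \<le> a' * (2 * m + 1)"
    using assms by (intro mult_right_mono) auto
  thus ?thesis unfolding block_interval_def by (auto simp: algebra_simps)
qed

lemma cyc_translate_block_intervals_disjoint:
  assumes "0 \<le> m" "2 * R + 1 \<le> int n" "a \<noteq> a'"
    and "a \<in> {0..<(2 * R + 1) div (2 * m + 1)}" "a' \<in> {0..<(2 * R + 1) div (2 * m + 1)}"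
  shows "cyc_translate n x (block_interval R m a) \<inter> cyc_translate n x (block_interval R m a') = {}"
proof -
  have "inj_on (\<lambda>d. (x + d) mod int n) {-R..R}"
    by (rule inj_on_mod_translate) (use assms in auto)
  moreover have "block_interval R m a \<inter> block_interval R m a' = {}"
    using block_intervals_disjoint[OF assms(1)] assms(3) by (metis Int_commute linorder_neqE)
  moreover have "block_interval R m a \<subseteq> {-R..R}" "block_interval R m a' \<subseteq> {-R..R}"
    using block_interval_subset assms(1,4,5) by auto
  ultimately show ?thesis
    unfolding cyc_translate_def by (simp add: inj_on_image_Int[symmetric])
qed

lemma nbhd_tiling:
  fixes \<rho> r :: real
  defines "L \<equiv> (2 * \<lfloor>r\<rfloor> + 1) div (2 * \<lfloor>\<rho>\<rfloor> + 1)"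
  assumes c0: "c0 \<in> torus_vertices n" and "0 \<le> \<rho>" "0 \<le> r" "2 * r + 1 \<le> real n"
    and \<rho>n: "2 * \<lfloor>\<rho>\<rfloor> + 1 \<le> int n"
  obtains cen where "\<And>p. cen p \<in> torus_vertices n"
    and "\<And>p. card (nbhd n (cen p) \<rho>) = nat (2 * \<lfloor>\<rho>\<rfloor> + 1) ^ 2"
    and "\<And>p. p \<in> {0..<L} \<times> {0..<L} \<Longrightarrow> nbhd n (cen p) \<rho> \<subseteq> nbhd n c0 r"
    and "disjoint_family_on (\<lambda>p. nbhd n (cen p) \<rho>) ({0..<L} \<times> {0..<L})"
proof -
  define m R where "m = \<lfloor>\<rho>\<rfloor>" and "R = \<lfloor>r\<rfloor>"
  define ctr where "ctr x a = (x + (-R + a * (2 * m + 1) + m)) mod int n" for x a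
  define cen where "cen p = (ctr (fst c0) (fst p), ctr (snd c0) (snd p))" for p
  have m: "0 \<le> m" and R: "0 \<le> R" and Rn: "2 * R + 1 \<le> int n"
    using assms unfolding m_def R_def by (simp_all, linarith)
  have n: "0 < n" using Rn R by simp
  show ?thesis
  proof
    show cen: "cen p \<in> torus_vertices n" for p
      unfolding cen_def ctr_def torus_vertices_def using n by simp
    have ctr: "cyc_translate n (ctr x a) {-m..m} = cyc_translate n x (block_interval R m a)" for x a
      unfolding ctr_def cyc_translate_mod_shift block_interval_def by (simp add: algebra_simps)
    have nb: "nbhd n (cen p) \<rho> = cyc_translate n (fst c0) (block_interval R m (fst p))
                                 \<times> cyc_translate n (snd c0) (block_interval R m (snd p))" for p
      using nbhd_eq_cyc_translate[OF \<rho>n \<open>0 \<le> \<rho>\<close> cen] unfolding m_def[symmetric]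
      by (simp add: cen_def ctr)
    show "card (nbhd n (cen p) \<rho>) = nat (2 * \<lfloor>\<rho>\<rfloor> + 1) ^ 2" for p
      unfolding nb card_cartesian_product block_interval_def m_def[symmetric]
      using \<rho>n m by (simp add: card_cyc_translate_interval m_def power2_eq_square)
    have nb0: "nbhd n c0 r = cyc_translate n (fst c0) {-R..R} \<times> cyc_translate n (snd c0) {-R..R}"
      using nbhd_eq_cyc_translate[OF Rn[unfolded R_def] \<open>0 \<le> r\<close> c0] unfolding R_def .
    show "nbhd n (cen p) \<rho> \<subseteq> nbhd n c0 r" if "p \<in> {0..<L} \<times> {0..<L}" for p
    proof -
      have "fst p \<in> {0..<(2 * R + 1) div (2 * m + 1)}" "snd p \<in> {0..<(2 * R + 1) div (2 * m + 1)}"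
        using that unfolding L_def m_def R_def by auto
      hence "block_interval R m (fst p) \<subseteq> {-R..R}" "block_interval R m (snd p) \<subseteq> {-R..R}"
        using block_interval_subset[OF m] by auto
      thus ?thesis unfolding nb nb0 cyc_translate_def by blast
    qed
    show "disjoint_family_on (\<lambda>p. nbhd n (cen p) \<rho>) ({0..<L} \<times> {0..<L})"
      unfolding disjoint_family_on_def nb L_def m_def[symmetric] R_def[symmetric]
      using cyc_translate_block_intervals_disjoint[OF m Rn] by (fastforce simp: prod_eq_iff)
  qed
qed


subsection \<open>Independent fair types\<close>

definition fair_config :: "'a set \<Rightarrow> ('a \<Rightarrow> int) pmf" where
  "fair_config S = Pi_pmf S undefined (\<lambda>_. pmf_of_set {-1, 1})"

definition local_event :: "'a set \<Rightarrow> (('a \<Rightarrow> int) \<Rightarrow> bool) \<Rightarrow> bool" where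
  "local_event A P \<longleftrightarrow> (\<forall>f g. (\<forall>v\<in>A. f v = g v) \<longrightarrow> P f = P g)"

lemma local_eventD: "local_event A P \<Longrightarrow> (\<And>v. v \<in> A \<Longrightarrow> f v = g v) \<Longrightarrow> P f = P g"
  unfolding local_event_def by blast

lemma local_event_Ball:
  "(\<And>i. i \<in> I \<Longrightarrow> local_event (B i) (P i)) \<Longrightarrow> local_event (\<Union>i\<in>I. B i) (\<lambda>f. \<forall>i\<in>I. P i f)"
  unfolding local_event_def by (metis UN_I)

lemma PiE_dflt_undefined: "PiE_dflt A undefined B = PiE A B"
  by (auto simp: PiE_dflt_def PiE_def extensional_def)

lemma fair_config_eq_pmf_of_set:
  "finite S \<Longrightarrow> fair_config S = pmf_of_set (PiE S (\<lambda>_. {-1, 1}))"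
  unfolding fair_config_def by (subst Pi_pmf_of_set) (auto simp: PiE_dflt_undefined)

lemma config_prob_eq_fair_config:
  "config_prob n P = measure (fair_config (torus_vertices n)) {\<sigma>. P \<sigma>}"
  unfolding config_prob_def configs_def
  by (subst fair_config_eq_pmf_of_set) (simp_all add: torus_vertices_def)

lemma measure_pair_pmf_Times:
  "measure (pair_pmf p q) (X \<times> Y) = measure p X * measure q Y"
proof -
  have "measure (pair_pmf p q) (X \<times> Y) = measure (pair_pmf p q) ((X \<times> Y) \<inter> set_pmf (pair_pmf p q))"
    by (rule measure_Int_set_pmf[symmetric])
  also have "(X \<times> Y) \<inter> set_pmf (pair_pmf p q) = (X \<inter> set_pmf p) \<times> (Y \<inter> set_pmf q)" by auto
  also have "measure (pair_pmf p q) \<dots> = measure p (X \<inter> set_pmf p) * measure q (Y \<inter> set_pmf q)"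
    by (rule measure_pmf_prob_product) (auto intro: countable_subset)
  finally show ?thesis by (simp add: measure_Int_set_pmf)
qed

lemma measure_fair_config_local:
  assumes "finite V" "W \<subseteq> V" "local_event W P"
  shows "measure (fair_config V) {f. P f} = measure (fair_config W) {f. P f}"
proof -
  let ?h = "\<lambda>f x. if x \<in> W then f x else undefined"
  have "fair_config W = map_pmf ?h (fair_config V)"
    unfolding fair_config_def using assms(1,2) by (rule Pi_pmf_subset)
  moreover have "P (?h f) = P f" for f
    by (rule local_eventD[OF assms(3)]) simp
  hence "?h -` {f. P f} = {f. P f}" by auto
  ultimately show ?thesis by simp
qed

lemma measure_fair_config_Un:
  assumes "finite A" "finite B" "A \<inter> B = {}" "local_event A P" "local_event B Q"
  shows "measure (fair_config (A \<union> B)) {f. P f \<and> Q f}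
         = measure (fair_config A) {f. P f} * measure (fair_config B) {f. Q f}"
proof -
  let ?h = "\<lambda>(f, g) x. if x \<in> A then f x else g x"
  have "fair_config (A \<union> B) = map_pmf ?h (pair_pmf (fair_config A) (fair_config B))"
    unfolding fair_config_def using assms(1-3) by (rule Pi_pmf_union)
  hence "measure (fair_config (A \<union> B)) {f. P f \<and> Q f}
      = measure (pair_pmf (fair_config A) (fair_config B)) (?h -` {f. P f \<and> Q f})"
    by (simp only: measure_map_pmf)
  also have "?h -` {f. P f \<and> Q f} = {f. P f} \<times> {g. Q g}"
  proof -
    have "P (?h (f, g)) = P f" for f g
      by (rule local_eventD[OF assms(4)]) simp
    moreover have "Q (?h (f, g)) = Q g" for f g
      by (rule local_eventD[OF assms(5)]) (use assms(3) in auto)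
    ultimately show ?thesis by auto
  qed
  finally show ?thesis by (simp only: measure_pair_pmf_Times)
qed

lemma measure_fair_config_UN:
  assumes "finite I" "\<And>i. i \<in> I \<Longrightarrow> finite (B i)" "disjoint_family_on B I"
    and "\<And>i. i \<in> I \<Longrightarrow> local_event (B i) (P i)"
  shows "measure (fair_config (\<Union>i\<in>I. B i)) {f. \<forall>i\<in>I. P i f}
         = (\<Prod>i\<in>I. measure (fair_config (B i)) {f. P i f})"
  using assms
proof (induction I rule: finite_induct)
  case (insert a I)
  have "B a \<inter> (\<Union>i\<in>I. B i) = {}"
    using insert.hyps(2) insert.prems(2) by (auto simp: disjoint_family_on_def)
  moreover have "local_event (\<Union>i\<in>I. B i) (\<lambda>f. \<forall>i\<in>I. P i f)"
    using insert.prems(3) by (intro local_event_Ball) simp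
  ultimately have "measure (fair_config (B a \<union> (\<Union>i\<in>I. B i))) {f. P a f \<and> (\<forall>i\<in>I. P i f)}
      = measure (fair_config (B a)) {f. P a f} * measure (fair_config (\<Union>i\<in>I. B i)) {f. \<forall>i\<in>I. P i f}"
    using insert.hyps(1) insert.prems(1,3) by (intro measure_fair_config_Un) simp_all
  also have "measure (fair_config (\<Union>i\<in>I. B i)) {f. \<forall>i\<in>I. P i f}
      = (\<Prod>i\<in>I. measure (fair_config (B i)) {f. P i f})"
    using insert.prems disjoint_family_on_mono[OF subset_insertI insert.prems(2)]
    by (intro insert.IH) simp_all
  finally show ?case using insert.hyps(1,2) by simp
qed simp

lemma measure_fair_config_few_minus:
  assumes "finite B" "card B = M"
  shows "measure (fair_config B) {f. card {v \<in> B. f v = -1} \<le> k} \<ge> real (M choose k) / 2 ^ M"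
proof -
  let ?S = "PiE B (\<lambda>_. {-1, 1::int})"
  let ?E = "{f \<in> ?S. card {v \<in> B. f v = -1} = k}"
  have S: "finite ?S" "?S \<noteq> {}" "card ?S = 2 ^ M"
    using assms by (simp_all add: finite_PiE PiE_eq_empty_iff card_PiE numeral_2_eq_2)
  define cfg where "cfg T v = (if v \<in> B then if v \<in> T then -1 else 1 else undefined :: int)" for T v
  have minus_cfg: "{v \<in> B. cfg T v = -1} = T" if "T \<subseteq> B" for T
    using that unfolding cfg_def by auto
  have "bij_betw (\<lambda>f. {v \<in> B. f v = -1}) ?E {T. T \<subseteq> B \<and> card T = k}"
  proof (rule bij_betwI[where g = cfg])
    show "cfg \<in> {T. T \<subseteq> B \<and> card T = k} \<rightarrow> ?E"
      using minus_cfg by (auto simp: cfg_def)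
    show "cfg {v \<in> B. f v = -1} = f" if "f \<in> ?E" for f
      using that by (auto simp: cfg_def fun_eq_iff PiE_def extensional_def)
  qed (auto simp: minus_cfg)
  hence "card ?E = card {T. T \<subseteq> B \<and> card T = k}" by (rule bij_betw_same_card)
  hence "card ?E = M choose k" using n_subsets[OF assms(1), of k] assms(2) by simp
  moreover have "real (card ?E) / real (card ?S)
      \<le> real (card (?S \<inter> {f. card {v \<in> B. f v = -1} \<le> k})) / real (card ?S)"
    using S by (intro divide_right_mono of_nat_mono card_mono) auto
  ultimately show ?thesis
    using S unfolding fair_config_eq_pmf_of_set[OF assms(1)] by (simp add: measure_pmf_of_set)
qed

lemma measure_fair_config_all_blocks_dense:
  assumes "finite V" "finite I" "\<And>i. i \<in> I \<Longrightarrow> B i \<subseteq> V" "\<And>i. i \<in> I \<Longrightarrow> card (B i) = M"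
    and "disjoint_family_on B I"
  shows "measure (fair_config V) {f. \<forall>i\<in>I. k < card {v \<in> B i. f v = -1}}
         \<le> (1 - real (M choose k) / 2 ^ M) ^ card I"
proof -
  have fin: "finite (B i)" if "i \<in> I" for i using assms(1,3) that by (meson finite_subset)
  have loc: "local_event (B i) (\<lambda>f. k < card {v \<in> B i. f v = -1})" for i
    unfolding local_event_def by (intro allI impI arg_cong[where f = "\<lambda>S. k < card S"]) auto
  have "measure (fair_config V) {f. \<forall>i\<in>I. k < card {v \<in> B i. f v = -1}}
      = measure (fair_config (\<Union>i\<in>I. B i)) {f. \<forall>i\<in>I. k < card {v \<in> B i. f v = -1}}"
    using assms(1,3) loc by (intro measure_fair_config_local local_event_Ball) auto
  also have "\<dots> = (\<Prod>i\<in>I. measure (fair_config (B i)) {f. k < card {v \<in> B i. f v = -1}})"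
    using assms fin loc by (intro measure_fair_config_UN) auto
  also have "\<dots> \<le> (\<Prod>i\<in>I. 1 - real (M choose k) / 2 ^ M)"
  proof (intro prod_mono conjI)
    fix i assume i: "i \<in> I"
    have eq: "{f. k < card {v \<in> B i. f v = -1}} = UNIV - {f. card {v \<in> B i. f v = -1} \<le> k}"
      by auto
    have "measure (fair_config (B i)) (UNIV - {f. card {v \<in> B i. f v = -1} \<le> k})
        = 1 - measure (fair_config (B i)) {f. card {v \<in> B i. f v = -1} \<le> k}"
      using measure_pmf.prob_compl[of "{f. card {v \<in> B i. f v = -1} \<le> k}" "fair_config (B i)"]
      by simp
    thus "measure (fair_config (B i)) {f. k < card {v \<in> B i. f v = -1}} \<le> 1 - real (M choose k) / 2 ^ M"
      unfolding eq using measure_fair_config_few_minus[OF fin[OF i] assms(4)[OF i], of k] by linarith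
  qed simp
  finally show ?thesis by simp
qed

lemma config_prob_sparse_nbhd_inside:
  fixes \<rho> r :: real
  defines "L \<equiv> nat ((2 * \<lfloor>r\<rfloor> + 1) div (2 * \<lfloor>\<rho>\<rfloor> + 1))" and "M \<equiv> nat (2 * \<lfloor>\<rho>\<rfloor> + 1) ^ 2"
  assumes "c0 \<in> torus_vertices n" "0 \<le> \<rho>" "0 \<le> r" "2 * r + 1 \<le> real n"
    and "2 * \<lfloor>\<rho>\<rfloor> + 1 \<le> int n"
  shows "config_prob n (\<lambda>\<sigma>. \<exists>c. c \<in> torus_vertices n \<and> minus_count \<sigma> (nbhd n c \<rho>) \<le> k
            \<and> nbhd n c \<rho> \<subseteq> nbhd n c0 r)
         \<ge> 1 - (1 - real (M choose k) / 2 ^ M) ^ (L ^ 2)"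
proof -
  define I where "I = {0..<int L} \<times> {0..<int L}"
  have "(2 * \<lfloor>r\<rfloor> + 1) div (2 * \<lfloor>\<rho>\<rfloor> + 1) = int L"
    unfolding L_def using assms(4,5) by (simp add: pos_imp_zdiv_nonneg_iff)
  then obtain cen where cen: "\<And>p. cen p \<in> torus_vertices n"
    "\<And>p. card (nbhd n (cen p) \<rho>) = M" "\<And>p. p \<in> I \<Longrightarrow> nbhd n (cen p) \<rho> \<subseteq> nbhd n c0 r"
    "disjoint_family_on (\<lambda>p. nbhd n (cen p) \<rho>) I"
    using nbhd_tiling[OF assms(3-7)] unfolding I_def M_def by auto
  let ?dense = "{\<sigma> :: int \<times> int \<Rightarrow> int. \<forall>p\<in>I. k < card {v \<in> nbhd n (cen p) \<rho>. \<sigma> v = -1}}"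
  have "1 - (1 - real (M choose k) / 2 ^ M) ^ (L ^ 2) \<le> 1 - measure (fair_config (torus_vertices n)) ?dense"
  proof -
    have "card I = L ^ 2" unfolding I_def by (simp add: power2_eq_square)
    moreover have "nbhd n (cen p) \<rho> \<subseteq> torus_vertices n" for p unfolding nbhd_def by auto
    ultimately show ?thesis
      using measure_fair_config_all_blocks_dense[of "torus_vertices n" I "\<lambda>p. nbhd n (cen p) \<rho>" M k] cen
      by (simp add: I_def torus_vertices_def)
  qed
  also have "\<dots> = measure (fair_config (torus_vertices n)) (UNIV - ?dense)"
    using measure_pmf.prob_compl[of ?dense "fair_config (torus_vertices n)"] by simp
  also have "\<dots> \<le> config_prob n (\<lambda>\<sigma>. \<exists>c. c \<in> torus_vertices n \<and> minus_count \<sigma> (nbhd n c \<rho>) \<le> k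
            \<and> nbhd n c \<rho> \<subseteq> nbhd n c0 r)"
    unfolding config_prob_eq_fair_config
  proof (rule measure_pmf.finite_measure_mono)
    show "UNIV - ?dense \<subseteq> {\<sigma>. \<exists>c. c \<in> torus_vertices n \<and> minus_count \<sigma> (nbhd n c \<rho>) \<le> k
            \<and> nbhd n c \<rho> \<subseteq> nbhd n c0 r}"
    proof
      fix \<sigma> assume "\<sigma> \<in> UNIV - ?dense"
      then obtain p where "p \<in> I" "minus_count \<sigma> (nbhd n (cen p) \<rho>) \<le> k"
        unfolding minus_count_def by (auto simp: not_less)
      thus "\<sigma> \<in> {\<sigma>. \<exists>c. c \<in> torus_vertices n \<and> minus_count \<sigma> (nbhd n c \<rho>) \<le> k
            \<and> nbhd n c \<rho> \<subseteq> nbhd n c0 r}"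
        using cen(1,3) by blast
    qed
  qed simp
  finally show ?thesis .
qed


lemma one_minus_power_ge:
  fixes q :: real
  assumes "0 \<le> q" "q \<le> 1"
  shows "1 - (1 - q) ^ K \<ge> min (q * real K) 1 / 2"
proof -
  define y where "y = min (q * real K) 1"
  have y: "0 \<le> y" "y \<le> 1" "y \<le> q * real K" unfolding y_def using assms by auto
  have "(1 - q) ^ K \<le> exp (- q) ^ K"
    using assms by (intro power_mono) (auto simp: exp_ge_add_one_self[of "-q", simplified])
  also have "\<dots> = exp (- (q * real K))" by (simp add: exp_of_nat_mult[symmetric] mult.commute)
  also have "\<dots> \<le> exp (- y)" using y by simp
  also have "\<dots> = 1 / exp y" by (simp add: exp_minus field_simps)
  also have "\<dots> \<le> 1 / (1 + y)" using y by (intro divide_left_mono) (auto simp: exp_ge_add_one_self)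
  also have "\<dots> \<le> 1 - y / 2"
  proof -
    have "1 \<le> (1 - y / 2) * (1 + y)"
      using y by (simp add: algebra_simps power2_eq_square) (smt (verit) mult_left_le_one_le)
    thus ?thesis using y by (simp add: field_simps)
  qed
  finally show ?thesis unfolding y_def by simp
qed

lemma nat_div_floor_ge:
  fixes r :: real and s :: int
  assumes "1 \<le> s" "real_of_int s + 1 \<le> r"
  shows "real (nat ((2 * \<lfloor>r\<rfloor> + 1) div s)) \<ge> r / real_of_int s"
proof -
  define R where "R = \<lfloor>r\<rfloor>"
  have "(2 * R + 1) div s * s = (2 * R + 1) - (2 * R + 1) mod s"
    by (simp add: minus_mod_eq_div_mult)
  moreover have "(2 * R + 1) mod s < s" using assms by simp
  ultimately have "(2 * R + 1) div s * s > 2 * R + 1 - s" by linarith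
  hence "real_of_int ((2 * R + 1) div s) * real_of_int s > real_of_int (2 * R + 1 - s)"
    by (metis of_int_less_iff of_int_mult)
  moreover have "r - 1 < real_of_int R" unfolding R_def by linarith
  ultimately have "real_of_int ((2 * R + 1) div s) * real_of_int s \<ge> r" using assms by simp
  hence "real_of_int ((2 * R + 1) div s) \<ge> r / real_of_int s"
    using assms by (simp add: field_simps)
  moreover have "0 \<le> (2 * R + 1) div s"
    using assms unfolding R_def by (simp add: pos_imp_zdiv_nonneg_iff)
  ultimately show ?thesis unfolding R_def by simp
qed

text \<open>The right-hand side is the expected number of blocks with at most \<open>k\<close> agents of
  type \<open>-1\<close> in the tiling of \<open>nbhd_tiling\<close>.\<close>
lemma expected_sparse_blocks_ge:
  fixes r :: real and m :: int
  defines "M \<equiv> nat (2 * m + 1) ^ 2" and "L \<equiv> nat ((2 * \<lfloor>r\<rfloor> + 1) div (2 * m + 1))"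
  assumes "0 \<le> m" "0 < k" "k < M" "real_of_int (2 * m + 1) + 1 \<le> r"
  shows "2 powr (real M * bin_entropy (real k / real M) - real M + 2 * log 2 r
                 - log 2 (real M * (real M + 1)))
         \<le> real (M choose k) / 2 ^ M * real (L ^ 2)"
proof -
  define H where "H = bin_entropy (real k / real M)"
  have r: "0 < r" and M: "real M = (real_of_int (2 * m + 1))\<^sup>2" "real M \<ge> 1"
    using assms unfolding M_def by auto
  have "real L \<ge> r / real_of_int (2 * m + 1)"
    unfolding L_def using nat_div_floor_ge[of "2 * m + 1" r] assms(3,6) by simp
  hence "(r / real_of_int (2 * m + 1))\<^sup>2 \<le> real L ^ 2"
    using r assms(3) by (intro power_mono) auto
  hence L: "r\<^sup>2 / real M \<le> real (L ^ 2)"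
    unfolding M by (simp add: power_divide)
  have "2 powr (real M * H) / real (M + 1) \<le> real (M choose k)"
    using entropy_le_binomial[OF assms(4,5)] unfolding H_def
    by (simp add: pos_divide_le_eq mult.commute)
  hence "2 powr (real M * H) / real (M + 1) / 2 ^ M \<le> real (M choose k) / 2 ^ M"
    by (rule divide_right_mono) simp
  hence q: "2 powr (real M * H) / (real (M + 1) * 2 ^ M) \<le> real (M choose k) / 2 ^ M"
    by (simp only: divide_divide_eq_left)
  have "2 powr (2 * log 2 r) = r\<^sup>2"
    using r by (simp add: powr_powr[symmetric] mult.commute[of 2] powr_realpow)
  moreover have "2 powr log 2 (real M * (real M + 1)) = real M * (real M + 1)"
    using M(2) by simp
  ultimately have "2 powr (real M * H - real M + 2 * log 2 r - log 2 (real M * (real M + 1)))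
      = 2 powr (real M * H) / 2 ^ M * r\<^sup>2 / (real M * (real M + 1))"
    by (simp add: powr_diff powr_add powr_realpow)
  also have "\<dots> = (2 powr (real M * H) / (real (M + 1) * 2 ^ M)) * (r\<^sup>2 / real M)"
    by (simp add: field_simps)
  also have "\<dots> \<le> real (M choose k) / 2 ^ M * real (L ^ 2)"
    using q L r by (intro mult_mono) auto
  finally show ?thesis unfolding H_def .
qed


subsection \<open>Asymptotics\<close>

lemma Nw_real: "real (Nw w) = (2 * real w + 1)^2"
  unfolding Nw_def by simp

lemma Nw_at_top: "filterlim (\<lambda>w. real (Nw w)) at_top sequentially"
  unfolding Nw_real by real_asymp

lemma Nw_ge_1: "real (Nw w) \<ge> 1"
  unfolding Nw_real by simp

lemma Nw_nat_at_top: "filterlim Nw at_top sequentially"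
proof -
  have "Nw w \<ge> w" for w unfolding Nw_def by (simp add: power2_eq_square)
  thus ?thesis by (intro filterlim_at_top_mono[OF filterlim_ident]) auto
qed

lemma lim_inverse_Nw: "((\<lambda>w. 1 / real (Nw w)) \<longlongrightarrow> 0) sequentially"
  unfolding Nw_real by real_asymp

definition width_of :: "nat \<Rightarrow> nat" where
  "width_of N = nat \<lfloor>(sqrt (real N) - 1) / 2\<rfloor>"

lemma width_of_Nw: "width_of (Nw w) = w"
proof -
  have "sqrt (real (Nw w)) = 2 * real w + 1" unfolding Nw_real by simp
  thus ?thesis unfolding width_of_def by simp
qed

lemma Nw_width_of_le: "1 \<le> N \<Longrightarrow> real (Nw (width_of N)) \<le> real N"
proof -
  assume N: "1 \<le> N"
  have s1: "sqrt (real N) \<ge> 1" using N by simp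
  have t0: "0 \<le> (sqrt (real N) - 1) / 2" using s1 by simp
  hence "0 \<le> \<lfloor>(sqrt (real N) - 1) / 2\<rfloor>" by simp
  hence "real (width_of N) = real_of_int \<lfloor>(sqrt (real N) - 1) / 2\<rfloor>" unfolding width_of_def by simp
  also have "\<dots> \<le> (sqrt (real N) - 1) / 2" by (rule of_int_floor_le)
  finally have "real (width_of N) \<le> (sqrt (real N) - 1) / 2" .
  hence "2 * real (width_of N) + 1 \<le> sqrt (real N)" by simp
  hence "(2 * real (width_of N) + 1)^2 \<le> (sqrt (real N))^2" by (intro power_mono) auto
  thus ?thesis unfolding Nw_real by simp
qed

lemma width_of_at_top: "filterlim width_of at_top sequentially"
proof (subst filterlim_at_top, intro allI)
  fix Z :: nat
  show "eventually (\<lambda>N. Z \<le> width_of N) sequentially"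
  proof (rule eventually_sequentiallyI[of "(2*Z+3)^2"])
    fix N assume N: "(2*Z+3)^2 \<le> N"
    have "real ((2*Z+3)^2) \<le> real N" using N by (simp only: of_nat_le_iff)
    hence "(2 * real Z + 3)^2 \<le> real N" by simp
    hence "2 * real Z + 3 \<le> sqrt (real N)" by (rule real_le_rsqrt)
    hence "real Z + 1 \<le> (sqrt (real N) - 1) / 2" by simp
    hence "int Z + 1 \<le> \<lfloor>(sqrt (real N) - 1) / 2\<rfloor>" by (simp add: le_floor_iff)
    thus "Z \<le> width_of N" unfolding width_of_def by simp
  qed
qed

locale radical_asymptotics =
  fixes tt \<epsilon> \<epsilon>' :: real and g :: "nat \<Rightarrow> real"
  assumes tt: "0 < tt" "tt < 1/2" and eps: "0 < \<epsilon>" "\<epsilon> < 1/2"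
    and eps': "0 < \<epsilon>'" "\<epsilon>' < 1/2" and g: "g \<in> o(\<lambda>N. real N)"
begin

text \<open>For width \<open>w\<close>: \<open>rad\<close> is the integer radius of the \<open>(1 + \<epsilon>') w\<close>-neighbourhoods,
  \<open>blk\<close> the number of agents in them, a neighbourhood is radical iff it has fewer than \<open>thr\<close>
  agents of type \<open>-1\<close>, i.e. at most \<open>kthr\<close> of them, and \<open>err\<close> collects the \<open>o(N)\<close> losses of
  the estimate: the factor \<open>M (M + 1)\<close> and the replacement of \<open>H(k / M)\<close> by \<open>H(\<tau>')\<close>.\<close>
definition "Nr w = real (Nw w)"
definition "rad w = \<lfloor>(1+\<epsilon>') * real w\<rfloor>"
definition "blk w = nat (2 * rad w + 1) ^ 2"
definition "thr w = tau_hat tt \<epsilon> w * (1+\<epsilon>')^2 * Nr w"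
definition "kthr w = nat (\<lceil>thr w\<rceil> - 1)"
definition "Htau w = bin_entropy (tau' tt w)"
definition "err w = 1 + log 2 (real (blk w) * (real (blk w) + 1))
   + (1+\<epsilon>')^2 * Nr w * \<bar>Htau w - bin_entropy (real (kthr w) / real (blk w))\<bar>"

lemma Nr_ge_1: "Nr w \<ge> 1" unfolding Nr_def by (rule Nw_ge_1)

lemma lim_inverse_Nr: "((\<lambda>w. 1 / Nr w) \<longlongrightarrow> 0) sequentially" using lim_inverse_Nw unfolding Nr_def .

lemma tau_bounds: "tt \<le> tau tt w" "tau tt w \<le> tt + 1 / Nr w"
proof -
  have N: "Nr w \<ge> 1" by (rule Nr_ge_1)
  have "tt * Nr w \<le> real_of_int \<lceil>tt * Nr w\<rceil>" by simp
  thus "tt \<le> tau tt w" unfolding tau_def Nr_def[symmetric] using N by (simp add: field_simps)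
  have "real_of_int \<lceil>tt * Nr w\<rceil> \<le> tt * Nr w + 1" by linarith
  thus "tau tt w \<le> tt + 1 / Nr w" unfolding tau_def Nr_def[symmetric] using N by (simp add: field_simps)
qed

lemma lim_tau: "((\<lambda>w. tau tt w) \<longlongrightarrow> tt) sequentially"
proof (rule tendsto_sandwich[of "\<lambda>_. tt" _ _ "\<lambda>w. tt + 1 / Nr w"])
  show "((\<lambda>w. tt + 1 / Nr w) \<longlongrightarrow> tt) sequentially"
    using tendsto_add[OF tendsto_const lim_inverse_Nr] by simp
qed (use tau_bounds in auto)

lemma tau_pos: "tau tt w > 0" using tau_bounds(1)[of w] tt by simp

lemma lim_tau_hat: "((\<lambda>w. tau_hat tt \<epsilon> w) \<longlongrightarrow> tt) sequentially"
proof -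
  have e: "tau_hat tt \<epsilon> w = tau tt w - Nr w powr (\<epsilon> - 1/2)" for w
  proof -
    have "Nr w powr (\<epsilon> - 1/2) = 1 / Nr w powr (1/2 - \<epsilon>)"
      using Nr_ge_1[of w] by (simp add: powr_minus_divide[symmetric])
    thus ?thesis unfolding tau_hat_def Nr_def[symmetric] using tau_pos[of w] Nr_ge_1[of w]
      by (simp add: field_simps)
  qed
  have "((\<lambda>w. Nr w powr (\<epsilon> - 1/2)) \<longlongrightarrow> 0) sequentially"
    using eps unfolding Nr_def by (intro tendsto_neg_powr Nw_at_top) auto
  from tendsto_diff[OF lim_tau this] show ?thesis unfolding e by simp
qed

lemma lim_tau': "((\<lambda>w. tau' tt w) \<longlongrightarrow> tt) sequentially"
proof -
  have e: "eventually (\<lambda>w. (tau tt w - 2 / Nr w) / (1 - 1 / Nr w) = tau' tt w) sequentially"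
  proof (rule eventually_sequentiallyI[of 1])
    fix w :: nat assume "1 \<le> w"
    hence "2 * real w + 1 \<ge> 3" by simp
    hence "(2 * real w + 1) * (2 * real w + 1) \<ge> 3 * 3" by (intro mult_mono) auto
    hence "Nr w > 1" unfolding Nr_def Nw_real by (simp add: power2_eq_square)
    thus "(tau tt w - 2 / Nr w) / (1 - 1 / Nr w) = tau' tt w"
      unfolding tau'_def Nr_def[symmetric] by (simp add: field_simps)
  qed
  have "((\<lambda>w. (tau tt w - 2 * (1 / Nr w)) / (1 - 1 / Nr w)) \<longlongrightarrow> (tt - 2 * 0) / (1 - 0)) sequentially"
    by (intro tendsto_intros lim_tau lim_inverse_Nr) simp
  thus ?thesis using e by (simp add: tendsto_cong)
qed

lemma rad_bounds: "(1+\<epsilon>') * real w - 1 < real_of_int (rad w)" "real_of_int (rad w) \<le> (1+\<epsilon>') * real w"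
  unfolding rad_def by linarith+

lemma rad_nonneg: "0 \<le> rad w" unfolding rad_def using eps' by simp

lemma blk_real: "real (blk w) = (2 * real_of_int (rad w) + 1)^2"
  unfolding blk_def using rad_nonneg[of w] by simp

lemma blk_pos: "real (blk w) \<ge> 1"
  unfolding blk_real using rad_nonneg[of w] by simp

lemma blk_le: "real (blk w) \<le> (1+\<epsilon>')^2 * Nr w"
proof -
  have "2 * real_of_int (rad w) + 1 \<le> (1+\<epsilon>') * (2 * real w + 1)"
    using rad_bounds(2)[of w] eps' by (simp add: algebra_simps)
  moreover have "0 \<le> 2 * real_of_int (rad w) + 1" using rad_nonneg[of w] by simp
  ultimately have "(2 * real_of_int (rad w) + 1)^2 \<le> ((1+\<epsilon>') * (2 * real w + 1))^2"
    by (rule power_mono)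
  thus ?thesis unfolding blk_real Nr_def Nw_real by (simp add: power_mult_distrib)
qed

lemma lim_blk_div_Nr: "((\<lambda>w. real (blk w) / Nr w) \<longlongrightarrow> (1+\<epsilon>')^2) sequentially"
proof -
  have r: "((\<lambda>w. (2 * real_of_int (rad w) + 1) / (2 * real w + 1)) \<longlongrightarrow> 1+\<epsilon>') sequentially"
  proof (rule tendsto_sandwich[of "\<lambda>w. (2*(1+\<epsilon>')*real w - 1) / (2 * real w + 1)" _ _
        "\<lambda>w. (2*(1+\<epsilon>')*real w + 1) / (2 * real w + 1)"])
    show "\<forall>\<^sub>F w in sequentially. (2*(1+\<epsilon>')*real w - 1) / (2 * real w + 1) \<le> (2 * real_of_int (rad w) + 1) / (2 * real w + 1)"
    proof (intro always_eventually allI divide_right_mono)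
      fix w show "2*(1+\<epsilon>')*real w - 1 \<le> 2 * real_of_int (rad w) + 1" using rad_bounds(1)[of w] by linarith
    qed simp
    show "\<forall>\<^sub>F w in sequentially. (2 * real_of_int (rad w) + 1) / (2 * real w + 1) \<le> (2*(1+\<epsilon>')*real w + 1) / (2 * real w + 1)"
    proof (intro always_eventually allI divide_right_mono)
      fix w show "2 * real_of_int (rad w) + 1 \<le> 2*(1+\<epsilon>')*real w + 1" using rad_bounds(2)[of w] by linarith
    qed simp
    show "((\<lambda>w. (2*(1+\<epsilon>')*real w - 1) / (2 * real w + 1)) \<longlongrightarrow> 1+\<epsilon>') sequentially"
      using eps' by real_asymp
    show "((\<lambda>w. (2*(1+\<epsilon>')*real w + 1) / (2 * real w + 1)) \<longlongrightarrow> 1+\<epsilon>') sequentially"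
      using eps' by real_asymp
  qed
  have "real (blk w) / Nr w = ((2 * real_of_int (rad w) + 1) / (2 * real w + 1))^2" for w
    unfolding blk_real Nr_def Nw_real by (simp add: power_divide)
  thus ?thesis using tendsto_power[OF r, of 2] by simp
qed

lemma lim_thr_div_Nr: "((\<lambda>w. thr w / Nr w) \<longlongrightarrow> tt * (1+\<epsilon>')^2) sequentially"
proof -
  have "thr w / Nr w = tau_hat tt \<epsilon> w * (1+\<epsilon>')^2" for w
    unfolding thr_def using Nr_ge_1[of w] by simp
  thus ?thesis using tendsto_mult[OF lim_tau_hat tendsto_const[of "(1+\<epsilon>')^2"]] by simp
qed

lemma Nr_at_top: "filterlim Nr at_top sequentially" using Nw_at_top unfolding Nr_def[abs_def] .

lemma eventually_thr_gt_1: "eventually (\<lambda>w. thr w > 1) sequentially"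
proof -
  have "filterlim (\<lambda>w. thr w / Nr w * Nr w) at_top sequentially"
    using tt eps' by (intro filterlim_tendsto_pos_mult_at_top[OF lim_thr_div_Nr _ Nr_at_top]) simp
  moreover have "thr w / Nr w * Nr w = thr w" for w using Nr_ge_1[of w] by simp
  ultimately show ?thesis by (simp add: filterlim_at_top_dense)
qed

lemma kthr_bounds: "thr w > 0 \<Longrightarrow> thr w - 1 \<le> real (kthr w) \<and> real (kthr w) < thr w"
proof -
  assume T: "thr w > 0"
  have c: "thr w \<le> real_of_int \<lceil>thr w\<rceil>" "real_of_int \<lceil>thr w\<rceil> < thr w + 1" by linarith+
  hence "\<lceil>thr w\<rceil> \<ge> 1" using T by linarith
  hence "real (kthr w) = real_of_int \<lceil>thr w\<rceil> - 1" unfolding kthr_def by simp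
  thus ?thesis using c by linarith
qed

lemma lim_kthr_div_Nr: "((\<lambda>w. real (kthr w) / Nr w) \<longlongrightarrow> tt * (1+\<epsilon>')^2) sequentially"
proof (rule tendsto_sandwich[of "\<lambda>w. thr w / Nr w - 1 / Nr w" _ _ "\<lambda>w. thr w / Nr w"])
  show "\<forall>\<^sub>F w in sequentially. thr w / Nr w - 1 / Nr w \<le> real (kthr w) / Nr w"
    using eventually_thr_gt_1
  proof eventually_elim
    case (elim w) thus ?case using kthr_bounds[of w] Nr_ge_1[of w] by (simp add: diff_divide_distrib[symmetric] divide_right_mono)
  qed
  show "\<forall>\<^sub>F w in sequentially. real (kthr w) / Nr w \<le> thr w / Nr w"
    using eventually_thr_gt_1
  proof eventually_elim
    case (elim w) thus ?case using kthr_bounds[of w] Nr_ge_1[of w] by (simp add: divide_right_mono)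
  qed
  show "((\<lambda>w. thr w / Nr w - 1 / Nr w) \<longlongrightarrow> tt * (1+\<epsilon>')^2) sequentially"
    using tendsto_diff[OF lim_thr_div_Nr lim_inverse_Nr] by simp
qed (rule lim_thr_div_Nr)

lemma lim_kthr_div_blk: "((\<lambda>w. real (kthr w) / real (blk w)) \<longlongrightarrow> tt) sequentially"
proof -
  have "real (kthr w) / real (blk w) = (real (kthr w) / Nr w) / (real (blk w) / Nr w)" for w
    using Nr_ge_1[of w] by simp
  moreover have "((\<lambda>w. (real (kthr w) / Nr w) / (real (blk w) / Nr w)) \<longlongrightarrow> tt * (1+\<epsilon>')^2 / (1+\<epsilon>')^2) sequentially"
    using eps' by (intro tendsto_divide lim_kthr_div_Nr lim_blk_div_Nr) auto
  moreover have "tt * (1+\<epsilon>')^2 / (1+\<epsilon>')^2 = tt" using eps' by simp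
  ultimately show ?thesis by (simp only:)
qed

lemma lim_bin_entropy_kthr_div_blk: "((\<lambda>w. bin_entropy (real (kthr w) / real (blk w))) \<longlongrightarrow> bin_entropy tt) sequentially"
  using tt by (intro isCont_tendsto_compose[OF isCont_bin_entropy lim_kthr_div_blk]) auto

lemma lim_Htau: "((\<lambda>w. Htau w) \<longlongrightarrow> bin_entropy tt) sequentially"
  unfolding Htau_def using tt by (intro isCont_tendsto_compose[OF isCont_bin_entropy lim_tau']) auto

lemma lim_g_div_Nr: "((\<lambda>w. g (Nw w) / Nr w) \<longlongrightarrow> 0) sequentially"
proof -
  have "((\<lambda>N. g N / real N) \<longlongrightarrow> 0) sequentially" using smalloD_tendsto[OF g] .
  from filterlim_compose[OF this Nw_nat_at_top] show ?thesis unfolding Nr_def by simp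
qed

lemma lim_log_blk_div_Nr: "((\<lambda>w. log 2 (real (blk w) * (real (blk w) + 1)) / Nr w) \<longlongrightarrow> 0) sequentially"
proof (rule tendsto_sandwich[of "\<lambda>_. 0" _ _ "\<lambda>w. log 2 (12 * Nr w ^ 2) / Nr w"])
  have M3: "real (blk w) \<le> 3 * Nr w" for w
  proof -
    have "1+\<epsilon>' \<le> 3/2" using eps' by simp
    hence "(1+\<epsilon>')*(1+\<epsilon>') \<le> 3/2*(3/2)" using eps' by (intro mult_mono) auto
    hence "(1+\<epsilon>')^2 \<le> 3" by (simp add: power2_eq_square)
    hence "(1+\<epsilon>')^2 * Nr w \<le> 3 * Nr w" using Nr_ge_1[of w] by (intro mult_right_mono) auto
    thus ?thesis using blk_le[of w] by linarith
  qed
  show "\<forall>\<^sub>F w in sequentially. 0 \<le> log 2 (real (blk w) * (real (blk w) + 1)) / Nr w"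
  proof (intro always_eventually allI)
    fix w
    have "1 * 1 \<le> real (blk w) * (real (blk w) + 1)" using blk_pos[of w] by (intro mult_mono) auto
    thus "0 \<le> log 2 (real (blk w) * (real (blk w) + 1)) / Nr w" using Nr_ge_1[of w] by simp
  qed
  show "\<forall>\<^sub>F w in sequentially. log 2 (real (blk w) * (real (blk w) + 1)) / Nr w \<le> log 2 (12 * Nr w ^ 2) / Nr w"
  proof (intro always_eventually allI)
    fix w
    have a: "real (blk w) * (real (blk w) + 1) \<le> (3 * Nr w) * (4 * Nr w)"
      using M3[of w] Nr_ge_1[of w] blk_pos[of w] by (intro mult_mono) auto
    have "log 2 (real (blk w) * (real (blk w) + 1)) \<le> log 2 (12 * Nr w ^ 2)"
      using a blk_pos[of w] Nr_ge_1[of w] by (subst log_le_cancel_iff) (auto simp: power2_eq_square)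
    thus "log 2 (real (blk w) * (real (blk w) + 1)) / Nr w \<le> log 2 (12 * Nr w ^ 2) / Nr w"
      using Nr_ge_1[of w] by (simp add: divide_right_mono)
  qed
  have "((\<lambda>x::real. log 2 (12 * x ^ 2) / x) \<longlongrightarrow> 0) at_top" by real_asymp
  from filterlim_compose[OF this Nr_at_top] show "((\<lambda>w. log 2 (12 * Nr w ^ 2) / Nr w) \<longlongrightarrow> 0) sequentially" .
qed simp

lemma lim_err_div_Nr: "((\<lambda>w. err w / Nr w) \<longlongrightarrow> 0) sequentially"
proof -
  have "err w / Nr w = 1 / Nr w + log 2 (real (blk w) * (real (blk w) + 1)) / Nr w
     + (1+\<epsilon>')^2 * \<bar>Htau w - bin_entropy (real (kthr w) / real (blk w))\<bar>" for w
    unfolding err_def using Nr_ge_1[of w] by (simp add: add_divide_distrib)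
  moreover have "((\<lambda>w. 1 / Nr w + log 2 (real (blk w) * (real (blk w) + 1)) / Nr w
     + (1+\<epsilon>')^2 * \<bar>Htau w - bin_entropy (real (kthr w) / real (blk w))\<bar>) \<longlongrightarrow>
      0 + 0 + (1+\<epsilon>')^2 * \<bar>bin_entropy tt - bin_entropy tt\<bar>) sequentially"
    by (intro tendsto_intros lim_inverse_Nr lim_log_blk_div_Nr lim_Htau lim_bin_entropy_kthr_div_blk)
  ultimately show ?thesis by simp
qed

lemma err_ge_1: "err w \<ge> 1"
proof -
  have "1 * 1 \<le> real (blk w) * (real (blk w) + 1)" using blk_pos[of w] by (intro mult_mono) auto
  moreover have "0 \<le> (1+\<epsilon>')^2 * Nr w * \<bar>Htau w - bin_entropy (real (kthr w) / real (blk w))\<bar>"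
    using Nr_ge_1[of w] by simp
  ultimately show ?thesis unfolding err_def by simp
qed

definition "outer w = 2 powr ((1 - Htau w) * Nr w / 2 - g (Nw w))"
definition "blocks w = nat ((2 * \<lfloor>outer w\<rfloor> + 1) div (2 * rad w + 1))"
definition "good_prob w = real (blk w choose kthr w) / 2 ^ blk w"
definition "expo w = (1 - Htau w) * (2 * \<epsilon>' + \<epsilon>'^2) * Nr w + 2 * \<bar>g (Nw w)\<bar> + err w"

definition regular :: "nat \<Rightarrow> bool" where
  "regular w \<longleftrightarrow> 0 < kthr w \<and> kthr w < blk w \<and> 0 < tau' tt w \<and> tau' tt w < 1 \<and> thr w > 1
     \<and> outer w \<ge> 2 * real_of_int (rad w) + 2"

text \<open>The outer radius is exponential in \<open>N\<close> because \<open>H(\<tau>') \<rightarrow> H(\<tau>~) < 1\<close> and \<open>g = o(N)\<close>.\<close>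
lemma eventually_outer_ge: "eventually (\<lambda>w. outer w \<ge> 2 * real_of_int (rad w) + 2) sequentially"
proof -
  define c where "c = 1 - bin_entropy tt"
  have c: "c > 0" unfolding c_def using bin_entropy_less_1[of tt] tt by simp
  have e1: "eventually (\<lambda>w. Htau w < bin_entropy tt + c/2) sequentially"
    using c by (intro order_tendstoD(2)[OF lim_Htau]) simp
  have c8: "0 < c/8" using c by simp
  have "((\<lambda>w. \<bar>g (Nw w) / Nr w\<bar>) \<longlongrightarrow> 0) sequentially" by (rule tendsto_rabs_zero[OF lim_g_div_Nr])
  from order_tendstoD(2)[OF this c8]
  have e2: "eventually (\<lambda>w. \<bar>g (Nw w) / Nr w\<bar> < c/8) sequentially" .
  have "((\<lambda>x::real. log 2 (3 * x) / x) \<longlongrightarrow> 0) at_top" by real_asymp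
  from filterlim_compose[OF this Nr_at_top]
  have e3: "eventually (\<lambda>w. log 2 (3 * Nr w) / Nr w < c/8) sequentially"
    by (rule order_tendstoD(2)[OF _ c8])
  from e1 e2 e3 show ?thesis
  proof eventually_elim
    case (elim w)
    have N: "Nr w \<ge> 1" by (rule Nr_ge_1)
    have a: "1 - Htau w > c/2" using elim(1) unfolding c_def by (simp add: field_simps)
    have b: "g (Nw w) < c/8 * Nr w" using elim(2) N by (simp add: abs_less_iff field_simps)
    have d: "log 2 (3 * Nr w) < c/8 * Nr w" using elim(3) N by (simp add: field_simps)
    have "(1 - Htau w) * Nr w / 2 \<ge> c/2 * Nr w / 2" using a N by (intro divide_right_mono mult_right_mono) auto
    hence ex: "(1 - Htau w) * Nr w / 2 - g (Nw w) > log 2 (3 * Nr w)" using b d by (simp add: field_simps)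
    have "3 * Nr w = 2 powr (log 2 (3 * Nr w))" using N by simp
    also have "\<dots> < outer w" unfolding outer_def using ex by simp
    finally have r3: "3 * Nr w < outer w" .
    have "2 * real_of_int (rad w) + 1 \<le> (1+\<epsilon>') * (2 * real w + 1)"
      using rad_bounds(2)[of w] eps' by (simp add: algebra_simps)
    also have "\<dots> \<le> 2 * (2 * real w + 1)" using eps' by (intro mult_right_mono) auto
    also have "2 * real w + 1 \<le> Nr w" unfolding Nr_def Nw_real by (simp add: power2_eq_square)
    finally show ?case using r3 N by linarith
  qed
qed

lemma eventually_regular: "eventually regular sequentially"
proof -
  have e1: "eventually (\<lambda>w. real (kthr w) / real (blk w) < 1) sequentially"
    using tt by (intro order_tendstoD(2)[OF lim_kthr_div_blk]) simp
  have e2: "eventually (\<lambda>w. 0 < tau' tt w) sequentially"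
    using tt by (intro order_tendstoD(1)[OF lim_tau']) simp
  have e3: "eventually (\<lambda>w. tau' tt w < 1) sequentially"
    using tt by (intro order_tendstoD(2)[OF lim_tau']) simp
  from e1 e2 e3 eventually_thr_gt_1 eventually_outer_ge show ?thesis
  proof eventually_elim
    case (elim w)
    have "real (kthr w) > 0" using kthr_bounds[of w] elim(4) by simp
    moreover have "real (kthr w) < real (blk w)" using elim(1) blk_pos[of w] by (simp add: field_simps)
    ultimately show ?case using elim unfolding regular_def by simp
  qed
qed

lemma config_prob_radical_ge_blocks:
  assumes "regular w" "c0 \<in> torus_vertices n" "2 * outer w + 1 \<le> real n"
  shows "config_prob n (\<lambda>\<sigma>. \<exists>c. radical_region tt \<epsilon> \<epsilon>' w n \<sigma> c \<and>
           nbhd n c ((1 + \<epsilon>') * real w) \<subseteq> nbhd n c0 (outer w))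
         \<ge> 1 - (1 - good_prob w) ^ (blocks w ^ 2)"
proof -
  define \<rho> where "\<rho> = (1 + \<epsilon>') * real w"
  have \<rho>: "0 \<le> \<rho>" "\<lfloor>\<rho>\<rfloor> = rad w" unfolding \<rho>_def rad_def using eps' by simp_all
  have outer: "0 \<le> outer w" unfolding outer_def by simp
  have "2 * \<lfloor>\<rho>\<rfloor> + 1 \<le> int n"
    using assms(1,3) outer unfolding \<rho>(2) regular_def by linarith
  hence "1 - (1 - good_prob w) ^ (blocks w ^ 2)
      \<le> config_prob n (\<lambda>\<sigma>. \<exists>c. c \<in> torus_vertices n \<and> minus_count \<sigma> (nbhd n c \<rho>) \<le> kthr w
            \<and> nbhd n c \<rho> \<subseteq> nbhd n c0 (outer w))"
    using config_prob_sparse_nbhd_inside[OF assms(2) \<rho>(1) outer assms(3)]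
    unfolding good_prob_def blocks_def blk_def \<rho>(2) by simp
  also have "\<dots> \<le> config_prob n (\<lambda>\<sigma>. \<exists>c. radical_region tt \<epsilon> \<epsilon>' w n \<sigma> c \<and>
           nbhd n c \<rho> \<subseteq> nbhd n c0 (outer w))"
    unfolding config_prob_def
  proof (rule measure_pmf.finite_measure_mono)
    have "radical_region tt \<epsilon> \<epsilon>' w n \<sigma> c"
      if "c \<in> torus_vertices n" "minus_count \<sigma> (nbhd n c \<rho>) \<le> kthr w" for \<sigma> c
      using that kthr_bounds[of w] assms(1)
      unfolding radical_region_def regular_def thr_def Nr_def \<rho>_def by simp
    thus "{\<sigma>. \<exists>c. c \<in> torus_vertices n \<and> minus_count \<sigma> (nbhd n c \<rho>) \<le> kthr w
            \<and> nbhd n c \<rho> \<subseteq> nbhd n c0 (outer w)}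
          \<subseteq> {\<sigma>. \<exists>c. radical_region tt \<epsilon> \<epsilon>' w n \<sigma> c \<and> nbhd n c \<rho> \<subseteq> nbhd n c0 (outer w)}"
      by blast
  qed simp
  finally show ?thesis unfolding \<rho>_def .
qed

lemma good_prob_times_blocks_ge:
  assumes "regular w"
  shows "2 powr (1 - expo w) \<le> good_prob w * real (blocks w ^ 2)"
proof -
  define M H where "M = blk w" and "H = bin_entropy (real (kthr w) / real M)"
  define A where "A = (1 + \<epsilon>')^2 * Nr w"
  have "2 powr (real M * H - real M + 2 * log 2 (outer w) - log 2 (real M * (real M + 1)))
        \<le> good_prob w * real (blocks w ^ 2)"
    using expected_sparse_blocks_ge[where m = "rad w" and k = "kthr w" and r = "outer w"] rad_nonneg assms
    unfolding good_prob_def blocks_def M_def H_def blk_def regular_def by simp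
  moreover have "1 - expo w \<le> real M * H - real M + 2 * log 2 (outer w) - log 2 (real M * (real M + 1))"
  proof -
    have "2 * log 2 (outer w) = (1 - Htau w) * Nr w - 2 * g (Nw w)"
      unfolding outer_def by (simp add: log_powr)
    moreover have "H \<le> 1"
      using assms unfolding H_def M_def regular_def by (intro bin_entropy_le_1) (auto simp: field_simps)
    hence "real M * (H - 1) \<ge> A * (H - 1)"
      using blk_le[of w] unfolding M_def A_def by (intro mult_right_mono_neg) auto
    moreover have "A * (H - 1) + A * (1 - Htau w) + A * \<bar>Htau w - H\<bar> = A * (H - Htau w + \<bar>Htau w - H\<bar>)"
      by (simp add: algebra_simps)
    hence "A * (H - 1) + A * (1 - Htau w) + A * \<bar>Htau w - H\<bar> \<ge> 0"
      using Nr_ge_1[of w] unfolding A_def by simp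
    moreover have "(1 - Htau w) * (2 * \<epsilon>' + \<epsilon>'^2) * Nr w + (1 - Htau w) * Nr w = A * (1 - Htau w)"
      unfolding A_def by (simp add: algebra_simps power2_eq_square)
    ultimately show ?thesis
      unfolding expo_def err_def M_def[symmetric] H_def[symmetric] A_def[symmetric]
      by (simp add: algebra_simps)
  qed
  ultimately show ?thesis by (smt (verit) powr_mono)
qed

lemma config_prob_radical_ge:
  assumes "regular w" "c0 \<in> torus_vertices n" "2 * outer w + 1 \<le> real n"
  shows "config_prob n (\<lambda>\<sigma>. \<exists>c. radical_region tt \<epsilon> \<epsilon>' w n \<sigma> c \<and>
           nbhd n c ((1 + \<epsilon>') * real w) \<subseteq> nbhd n c0 (outer w))
         \<ge> 2 powr (- expo w)"
proof -
  have q: "0 \<le> good_prob w" "good_prob w \<le> 1"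
    unfolding good_prob_def using binomial_le_pow2[of "blk w" "kthr w"] by (auto simp: field_simps)
  have "0 \<le> (1 - Htau w) * (2 * \<epsilon>' + \<epsilon>'^2) * Nr w"
    using Nr_ge_1[of w] eps' bin_entropy_le_1[of "tau' tt w"] assms(1)
    unfolding Htau_def regular_def by (intro mult_nonneg_nonneg) auto
  hence "expo w \<ge> 1" using err_ge_1[of w] unfolding expo_def by simp
  hence "2 powr (- expo w) \<le> 1 / 2"
    using powr_mono[of "- expo w" "-1" 2] by (simp add: powr_minus_divide)
  moreover have "2 powr (1 - expo w) = 2 * 2 powr (- expo w)"
    using powr_add[of 2 1 "- expo w"] by simp
  hence "2 powr (- expo w) \<le> good_prob w * real (blocks w ^ 2) / 2"
    using good_prob_times_blocks_ge[OF assms(1)] by simp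
  ultimately have "2 powr (- expo w) \<le> min (good_prob w * real (blocks w ^ 2)) 1 / 2"
    by simp
  also have "\<dots> \<le> 1 - (1 - good_prob w) ^ (blocks w ^ 2)"
    by (rule one_minus_power_ge[OF q])
  also have "\<dots> \<le> config_prob n (\<lambda>\<sigma>. \<exists>c. radical_region tt \<epsilon> \<epsilon>' w n \<sigma> c \<and>
           nbhd n c ((1 + \<epsilon>') * real w) \<subseteq> nbhd n c0 (outer w))"
    by (rule config_prob_radical_ge_blocks[OF assms])
  finally show ?thesis .
qed

lemma error_term_smallo: "(\<lambda>N. 2 * \<bar>g N\<bar> + err (width_of N)) \<in> o(\<lambda>N. real N)"
proof (rule smalloI_tendsto)
  show "\<forall>\<^sub>F N in sequentially. real N \<noteq> 0"
    by (rule eventually_sequentiallyI[of 1]) simp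
  have "((\<lambda>N. 2 * \<bar>g N / real N\<bar>) \<longlongrightarrow> 2 * 0) sequentially"
    by (intro tendsto_mult tendsto_const tendsto_rabs_zero smalloD_tendsto[OF g])
  hence g': "((\<lambda>N. 2 * \<bar>g N\<bar> / real N) \<longlongrightarrow> 0) sequentially"
    by (simp add: abs_divide)
  have err': "((\<lambda>N. err (width_of N) / real N) \<longlongrightarrow> 0) sequentially"
  proof (rule tendsto_sandwich[of "\<lambda>_. 0" _ _ "\<lambda>N. err (width_of N) / Nr (width_of N)"])
    show "\<forall>\<^sub>F N in sequentially. 0 \<le> err (width_of N) / real N"
      using err_ge_1 by (intro always_eventually allI) (simp add: order_trans[OF zero_le_one])
    show "\<forall>\<^sub>F N in sequentially. err (width_of N) / real N \<le> err (width_of N) / Nr (width_of N)"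
    proof (rule eventually_sequentiallyI[of 1])
      fix N :: nat assume "1 \<le> N"
      thus "err (width_of N) / real N \<le> err (width_of N) / Nr (width_of N)"
        using Nw_width_of_le Nr_ge_1[of "width_of N"] err_ge_1[of "width_of N"] unfolding Nr_def
        by (intro divide_left_mono) auto
    qed
    show "((\<lambda>N. err (width_of N) / Nr (width_of N)) \<longlongrightarrow> 0) sequentially"
      using filterlim_compose[OF lim_err_div_Nr width_of_at_top] .
  qed simp
  show "((\<lambda>N. (2 * \<bar>g N\<bar> + err (width_of N)) / real N) \<longlongrightarrow> 0) sequentially"
    using tendsto_add[OF g' err'] by (simp add: add_divide_distrib)
qed

lemma eventually_config_prob_radical_ge:
  "\<forall>\<^sub>F w in sequentially.
      \<forall>n c0. c0 \<in> torus_vertices n \<longrightarrow>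
        (let N = Nw w;
             r = 2 powr ((1 - bin_entropy (tau' tt w)) * real N / 2 - g N)
         in 2 * r + 1 \<le> real n \<longrightarrow>
            config_prob n (\<lambda>\<sigma>. \<exists>c. radical_region tt \<epsilon> \<epsilon>' w n \<sigma> c \<and>
                 nbhd n c ((1 + \<epsilon>') * real w) \<subseteq> nbhd n c0 r)
            \<ge> 2 powr (- (1 - bin_entropy (tau' tt w)) * (2 * \<epsilon>' + \<epsilon>'^2) * real N
                       - (2 * \<bar>g N\<bar> + err (width_of N))))"
  using eventually_regular
proof eventually_elim
  case (elim w)
  have "- (1 - Htau w) * (2 * \<epsilon>' + \<epsilon>'^2) * Nr w - (2 * \<bar>g (Nw w)\<bar> + err w) = - expo w"
    unfolding expo_def by (simp add: algebra_simps)
  thus ?case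
    using config_prob_radical_ge[OF elim]
    unfolding Let_def width_of_Nw outer_def Htau_def Nr_def by simp
qed

end

theorem lemmaA5:
  fixes tt \<epsilon> \<epsilon>' :: real and g :: "nat \<Rightarrow> real"
  assumes "0 < tt" "tt < 1/2"
    and "0 < \<epsilon>" "\<epsilon> < 1/2" and "0 < \<epsilon>'" "\<epsilon>' < 1/2"
    and "g \<in> o(\<lambda>N. real N)"
  shows "\<exists>h :: nat \<Rightarrow> real. h \<in> o(\<lambda>N. real N) \<and>
    (\<forall>\<^sub>F w in sequentially.
      \<forall>n c0. c0 \<in> torus_vertices n \<longrightarrow>
        (let N = Nw w;
             r = 2 powr ((1 - bin_entropy (tau' tt w)) * real N / 2 - g N)
         in 2 * r + 1 \<le> real n \<longrightarrow>
            config_prob n (\<lambda>\<sigma>. \<exists>c. radical_region tt \<epsilon> \<epsilon>' w n \<sigma> c \<and>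
                 nbhd n c ((1 + \<epsilon>') * real w) \<subseteq> nbhd n c0 r)
            \<ge> 2 powr (- (1 - bin_entropy (tau' tt w)) * (2 * \<epsilon>' + \<epsilon>'^2) * real N - h N)))"
proof -
  interpret radical_asymptotics tt \<epsilon> \<epsilon>' g
    using assms by unfold_locales auto
  show ?thesis
    using error_term_smallo eventually_config_prob_radical_ge by blast
qed

end
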